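(* Let $n\geq 2$ and let $0<k_1<k_2<\cdots<k_r<n$ be integers; put $k_0=0$. Let $$\mathcal{W}^{\Theta}=\{w\in S_n:\ w(1)<\cdots<w(k_1),\ w(k_1+1)<\cdots<w(k_2),\ \dots,\ w(k_r+1)<\cdots<w(n)\}.$$ For $w\in\mathcal{W}^{\Theta}$ with code $\alpha=(\alpha_1,\dots,\alpha_{n-1})$, and for each $j\in\{1,\dots,r\}$, the sequence $\lambda^j(w)=(\alpha_{k_j},\alpha_{k_j-1},\dots,\alpha_{k_{j-1}+1})$ is a partition whose Ferrers diagram fits in a $(k_j-k_{j-1})\times(n-k_j)$ rectangle (at most $k_j-k_{j-1}$ parts, each at most $n-k_j$), and the map $w\mapsto(\lambda^1(w),\dots,\lambda^r(w))$ is a bijection from $\mathcal{W}^{\Theta}$ onto $\prod_{j=1}^{r}\mathcal{P}_j$, where $\mathcal{P}_j$ is the set of partitions whose Ferrers diagram fits in a $(k_j-k_{j-1})\times(n-k_j)$ rectangle.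
   Context: Permutations $w\in S_n$ are written in one-line notation $w=w(1)\cdots w(n)$. The code of $w$ is $\alpha=(\alpha_1,\dots,\alpha_{n-1})$ with $\alpha_i=\#\{k>i:\ w(k)<w(i)\}$. A partition is a weakly decreasing finite sequence of nonnegative integers (zeros allowed/ignored). *)

theory Defs
  imports "HOL-Combinatorics.Permutations"
begin

definition code_entry :: "nat \<Rightarrow> (nat \<Rightarrow> nat) \<Rightarrow> nat \<Rightarrow> nat" where
  "code_entry n w i = card {k. i < k \<and> k \<le> n \<and> w k < w i}"

text \<open>End of block j (0 <= j <= r): block j is positions k j + 1 .. block_end.\<close>
definition block_end :: "nat \<Rightarrow> (nat \<Rightarrow> nat) \<Rightarrow> nat \<Rightarrow> nat \<Rightarrow> nat" where
  "block_end n k r j = (if j < r then k (Suc j) else n)"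

definition W_Theta :: "nat \<Rightarrow> (nat \<Rightarrow> nat) \<Rightarrow> nat \<Rightarrow> (nat \<Rightarrow> nat) set" where
  "W_Theta n k r = {w. w permutes {1..n} \<and>
     (\<forall>j\<le>r. \<forall>i. k j < i \<and> i < block_end n k r j \<longrightarrow> w i < w (Suc i))}"

definition lambda_part :: "nat \<Rightarrow> (nat \<Rightarrow> nat) \<Rightarrow> (nat \<Rightarrow> nat) \<Rightarrow> nat \<Rightarrow> nat list" where
  "lambda_part n k w j = map (\<lambda>t. code_entry n w (k j - t)) [0..<k j - k (j - 1)]"

text \<open>Partitions fitting in an a x b rectangle, represented as weakly decreasing
  lists of length exactly a (padded with zeros) with all entries <= b.\<close>
definition fits_rect :: "nat \<Rightarrow> nat \<Rightarrow> nat list \<Rightarrow> bool" where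
  "fits_rect a b xs \<longleftrightarrow> length xs = a \<and> sorted_wrt (\<ge>) xs \<and> (\<forall>x\<in>set xs. x \<le> b)"

definition rect_partitions :: "nat \<Rightarrow> nat \<Rightarrow> nat list set" where
  "rect_partitions a b = {xs. fits_rect a b xs}"

text \<open>The product P_1 x ... x P_r, as lists of length r whose (j-1)-th entry lies in P_j.\<close>
definition partition_product :: "nat \<Rightarrow> (nat \<Rightarrow> nat) \<Rightarrow> nat \<Rightarrow> nat list list set" where
  "partition_product n k r = {Ls. length Ls = r \<and>
     (\<forall>j<r. Ls ! j \<in> rect_partitions (k (Suc j) - k j) (n - k (Suc j)))}"

definition lambda_map :: "nat \<Rightarrow> (nat \<Rightarrow> nat) \<Rightarrow> nat \<Rightarrow> (nat \<Rightarrow> nat) \<Rightarrow> nat list list" where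
  "lambda_map n k r w = map (lambda_part n k w) [1..<Suc r]"

end

theory Submission
  imports Defs
begin

(* The code is a bijection from the permutations of {1..n} onto the sequences with
   alpha_i <= n - i (the Lehmer code): it is injective because w i is determined by its rank
   alpha_i among w i, ..., w n, and both sets have n! elements. Since w i < w (i + 1) iff
   alpha_i <= alpha_(i+1), W_Theta consists of the permutations whose code is weakly increasing
   on each block. Read backwards, the code on the j-th block is lambda^j, and on the last block
   it vanishes because alpha_n = 0. So choosing the tuple of partitions amounts to choosing the
   code block by block. *)

declare upt_Suc [simp del]

lemma card_less_strict_mono:
  fixes x y :: "'a :: linorder"
  assumes "finite U" "x \<in> U" "x < y"
  shows "card {u\<in>U. u < x} < card {u\<in>U. u < y}"
  by (rule psubset_card_mono) (use assms in auto)

lemma card_less_eq_card_less_iff: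
  fixes x y :: "'a :: linorder"
  assumes "finite U" "x \<in> U" "y \<in> U"
  shows "card {u\<in>U. u < x} = card {u\<in>U. u < y} \<longleftrightarrow> x = y"
  using card_less_strict_mono[of U x y] card_less_strict_mono[of U y x] assms
  by (cases x y rule: linorder_cases) auto

lemma code_entry_le: "code_entry n w i \<le> n - i"
proof -
  have "code_entry n w i \<le> card {i<..n}"
    unfolding code_entry_def by (rule card_mono) auto
  then show ?thesis by simp
qed

lemma code_entry_eq_card_less:
  assumes "inj w"
  shows "code_entry n w i = card {u \<in> w ` {i..n}. u < w i}"
proof -
  have "{u \<in> w ` {i..n}. u < w i} = w ` {q. i < q \<and> q \<le> n \<and> w q < w i}"
    by (auto simp: le_less)
  then show ?thesis
    unfolding code_entry_def using card_image[OF inj_on_subset[OF assms]] by simp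
qed

lemma code_entry_inj:
  assumes w: "w permutes {1..n}" and v: "v permutes {1..n}"
    and codes: "\<forall>i\<in>{1..n}. code_entry n w i = code_entry n v i"
  shows "w = v"
proof (rule ccontr)
  assume "w \<noteq> v"
  then have "\<exists>i. w i \<noteq> v i" by auto
  \<comment> \<open>at the first position where w and v differ, w i and v i have the same rank
    in the common set of values not yet used\<close>
  then obtain i where wi: "w i \<noteq> v i" and least: "\<And>q. q < i \<Longrightarrow> w q = v q"
    using exists_least_iff[of "\<lambda>i. w i \<noteq> v i"] by blast
  have i: "i \<in> {1..n}"
    using wi permutes_not_in[OF w] permutes_not_in[OF v] by fastforce
  have tail: "f ` {i..n} = {1..n} - f ` {1..<i}" if "f permutes {1..n}" for f
  proof -
    have "{i..n} = {1..n} - {1..<i}" using i by auto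
    then show ?thesis
      using image_set_diff[OF permutes_inj[OF that]] permutes_image[OF that] by simp
  qed
  define U where "U = w ` {i..n}"
  have "w ` {1..<i} = v ` {1..<i}" by (rule image_cong) (auto intro: least)
  then have U: "U = v ` {i..n}" unfolding U_def tail[OF w] tail[OF v] by simp
  have fin: "finite U" and wiU: "w i \<in> U" using i by (simp_all add: U_def)
  have viU: "v i \<in> U" using i by (simp add: U)
  have "card {u\<in>U. u < w i} = code_entry n w i"
    using code_entry_eq_card_less[OF permutes_inj[OF w]] by (simp add: U_def)
  also have "\<dots> = code_entry n v i" using codes i by blast
  also have "\<dots> = card {u\<in>U. u < v i}"
    using code_entry_eq_card_less[OF permutes_inj[OF v]] by (simp add: U)
  finally have "w i = v i" using card_less_eq_card_less_iff[OF fin wiU viU] by blast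
  then show False using wi by contradiction
qed

lemma prod_Suc_diff_eq_fact: "(\<Prod>i=1..n. Suc (n - i)) = fact n"
proof -
  have "(\<Prod>i=1..n. Suc (n - i)) = (\<Prod>i=1..n. i)"
    by (subst prod.atLeastAtMost_rev) (rule prod.cong, auto)
  then show ?thesis by (simp add: fact_prod)
qed

lemma bij_betw_code_entry:
  "bij_betw (\<lambda>w. restrict (code_entry n w) {1..n}) {w. w permutes {1..n}}
     (\<Pi>\<^sub>E i\<in>{1..n}. {..n - i})"
proof -
  let ?c = "\<lambda>w. restrict (code_entry n w) {1..n}"
  have inj: "inj_on ?c {w. w permutes {1..n}}"
    by (rule inj_onI) (use code_entry_inj in \<open>metis mem_Collect_eq restrict_apply'\<close>)
  have sub: "?c ` {w. w permutes {1..n}} \<subseteq> (\<Pi>\<^sub>E i\<in>{1..n}. {..n - i})"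
    using code_entry_le by auto
  have "card (?c ` {w. w permutes {1..n}}) = fact n"
    using card_image[OF inj] card_permutations[of "{1..n}" n] by simp
  also have "\<dots> = card (\<Pi>\<^sub>E i\<in>{1..n}. {..n - i})"
    using prod_Suc_diff_eq_fact[of n] by (simp add: card_PiE)
  finally have "?c ` {w. w permutes {1..n}} = (\<Pi>\<^sub>E i\<in>{1..n}. {..n - i})"
    by (intro card_subset_eq sub) (auto intro: finite_PiE)
  then show ?thesis using inj by (simp add: bij_betw_def)
qed

lemma ex_permutes_code_entry:
  assumes "\<forall>i\<in>{1..n}. \<alpha> i \<le> n - i"
  obtains w where "w permutes {1..n}" "\<forall>i\<in>{1..n}. code_entry n w i = \<alpha> i"
proof -
  have "restrict \<alpha> {1..n} \<in> (\<Pi>\<^sub>E i\<in>{1..n}. {..n - i})" using assms by auto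
  then obtain w where "w permutes {1..n}" "restrict (code_entry n w) {1..n} = restrict \<alpha> {1..n}"
    using bij_betw_code_entry[of n] unfolding bij_betw_def
    by (metis (no_types, lifting) imageE mem_Collect_eq)
  then show ?thesis using that by (metis restrict_apply')
qed

lemma code_entry_le_Suc_iff:
  assumes w: "w permutes {1..n}" and "Suc i \<le> n"
  shows "code_entry n w i \<le> code_entry n w (Suc i) \<longleftrightarrow> w i < w (Suc i)"
proof
  assume asc: "w i < w (Suc i)"
  have "{q. i < q \<and> q \<le> n \<and> w q < w i} \<subseteq> {q. Suc i < q \<and> q \<le> n \<and> w q < w (Suc i)}"
  proof safe
    fix q assume "i < q" "w q < w i"
    moreover from this have "q \<noteq> Suc i" using asc by auto
    ultimately show "Suc i < q" "w q < w (Suc i)" using asc by auto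
  qed
  then show "code_entry n w i \<le> code_entry n w (Suc i)"
    unfolding code_entry_def by (intro card_mono) auto
next
  assume le: "code_entry n w i \<le> code_entry n w (Suc i)"
  show "w i < w (Suc i)"
  proof (rule ccontr)
    assume "\<not> w i < w (Suc i)"
    then have "w (Suc i) < w i"
      using permutes_inj[OF w] by (metis inj_eq linorder_neqE_nat n_not_Suc_n)
    then have "code_entry n w (Suc i) < code_entry n w i"
      unfolding code_entry_def using assms(2) by (intro psubset_card_mono) auto
    then show False using le by simp
  qed
qed

lemma sorted_map_upt_iff:
  "sorted (map f [a..<b]) \<longleftrightarrow> (\<forall>i. a \<le> i \<and> Suc i < b \<longrightarrow> f i \<le> f (Suc i))"
proof -
  have "sorted (map f [a..<b]) \<longleftrightarrow> (\<forall>t. Suc t < b - a \<longrightarrow> f (a + t) \<le> f (Suc (a + t)))"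
    by (simp add: sorted_iff_nth_Suc)
  also have "\<dots> \<longleftrightarrow> (\<forall>i. a \<le> i \<and> Suc i < b \<longrightarrow> f i \<le> f (Suc i))"
  proof safe
    fix i assume H: "\<forall>t. Suc t < b - a \<longrightarrow> f (a + t) \<le> f (Suc (a + t))" and "a \<le> i" "Suc i < b"
    then show "f i \<le> f (Suc i)" using H[rule_format, of "i - a"] by simp
  next
    fix t assume H: "\<forall>i. a \<le> i \<and> Suc i < b \<longrightarrow> f i \<le> f (Suc i)" and "Suc t < b - a"
    then show "f (a + t) \<le> f (Suc (a + t))" using H[rule_format, of "a + t"] by simp
  qed
  finally show ?thesis .
qed

lemma sorted_map_upt_le_last:
  assumes "sorted (map f [a..<Suc b])" "a \<le> i" "i \<le> b"
  shows "f i \<le> f b"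
  using sorted_nth_mono[OF assms(1), of "i - a" "b - a"] assms(2,3) by simp

lemma bounded_lift_Suc_mono_le:
  fixes k :: "nat \<Rightarrow> 'a :: order"
  assumes "\<forall>j<r. k j < k (Suc j)" "a \<le> b" "b \<le> r"
  shows "k a \<le> k b"
  using assms(2,3)
proof (induction b rule: dec_induct)
  case (step b)
  then show ?case using assms(1) by (metis Suc_le_lessD order.strict_implies_order order.trans)
qed simp

lemma block_end_le:
  assumes "\<forall>j<r. k j < k (Suc j)" "k r < n" "j \<le> r"
  shows "block_end n k r j \<le> n"
  using bounded_lift_Suc_mono_le[OF assms(1), of "Suc j" r] assms
  by (auto simp: block_end_def)

lemma W_Theta_iff_sorted_code_blocks:
  assumes "\<forall>j<r. k j < k (Suc j)" "k r < n"
  shows "w \<in> W_Theta n k r \<longleftrightarrow> w permutes {1..n} \<and>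
    (\<forall>j\<le>r. sorted (map (code_entry n w) [Suc (k j)..<Suc (block_end n k r j)]))"
proof -
  have "(\<forall>i. k j < i \<and> i < block_end n k r j \<longrightarrow> w i < w (Suc i)) \<longleftrightarrow>
      sorted (map (code_entry n w) [Suc (k j)..<Suc (block_end n k r j)])"
    if "w permutes {1..n}" "j \<le> r" for j
    using code_entry_le_Suc_iff[OF that(1)] block_end_le[OF assms that(2)]
    by (auto simp: sorted_map_upt_iff Suc_le_eq)
  then show ?thesis unfolding W_Theta_def by auto
qed

lemma rev_lambda_part:
  assumes "k (j - 1) \<le> k j"
  shows "rev (lambda_part n k w j) = map (code_entry n w) [Suc (k (j - 1))..<Suc (k j)]"
  by (rule nth_equalityI) (use assms in \<open>auto simp: lambda_part_def rev_nth\<close>)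

lemma lambda_part_in_rect_partitions:
  assumes k: "\<forall>j<r. k j < k (Suc j)" "k r < n"
    and w: "w \<in> W_Theta n k r" and j: "j \<in> {1..r}"
  shows "lambda_part n k w j \<in> rect_partitions (k j - k (j - 1)) (n - k j)"
proof -
  have "j - 1 < r" using j by auto
  then have be: "block_end n k r (j - 1) = k j" using j by (simp add: block_end_def)
  have "k (j - 1) \<le> k j" using bounded_lift_Suc_mono_le[OF k(1), of "j - 1" j] j by simp
  then have rev: "rev (lambda_part n k w j) = map (code_entry n w) [Suc (k (j - 1))..<Suc (k j)]"
    by (rule rev_lambda_part)
  have "\<forall>j\<le>r. sorted (map (code_entry n w) [Suc (k j)..<Suc (block_end n k r j)])"
    using w W_Theta_iff_sorted_code_blocks[OF k] by blast
  then have sorted: "sorted (map (code_entry n w) [Suc (k (j - 1))..<Suc (k j)])"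
    using \<open>j - 1 < r\<close> be by (metis less_imp_le)
  have "set (lambda_part n k w j) = code_entry n w ` {Suc (k (j - 1))..<Suc (k j)}"
    using arg_cong[OF rev, of set] by simp
  moreover have "code_entry n w i \<le> n - k j" if "i \<in> {Suc (k (j - 1))..<Suc (k j)}" for i
    using sorted_map_upt_le_last[OF sorted, of i] that code_entry_le[of n w "k j"] by simp
  ultimately have "\<forall>x\<in>set (lambda_part n k w j). x \<le> n - k j" by auto
  moreover have "sorted_wrt (\<ge>) (lambda_part n k w j)"
    using sorted rev by (metis sorted_wrt_rev)
  ultimately show ?thesis
    by (simp add: rect_partitions_def fits_rect_def lambda_part_def)
qed

lemma code_entry_eq_0_last_block:
  assumes k: "\<forall>j<r. k j < k (Suc j)" "k r < n"
    and w: "w \<in> W_Theta n k r" and i: "k r < i" "i \<le> n"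
  shows "code_entry n w i = 0"
proof -
  have "sorted (map (code_entry n w) [Suc (k r)..<Suc n])"
    using w W_Theta_iff_sorted_code_blocks[OF k] by (force simp: block_end_def)
  then show ?thesis
    using sorted_map_upt_le_last[of "code_entry n w" "Suc (k r)" n i] i code_entry_le[of n w n]
    by simp
qed

lemma lambda_map_eq_iff:
  "lambda_map n k r w = Ls \<longleftrightarrow> length Ls = r \<and> (\<forall>j<r. lambda_part n k w (Suc j) = Ls ! j)"
  by (auto simp: lambda_map_def list_eq_iff_nth_eq)

lemma lambda_map_in_partition_product:
  assumes "\<forall>j<r. k j < k (Suc j)" "k r < n" "w \<in> W_Theta n k r"
  shows "lambda_map n k r w \<in> partition_product n k r"
proof -
  have "lambda_part n k w (Suc j) \<in> rect_partitions (k (Suc j) - k j) (n - k (Suc j))"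
    if "j < r" for j
    using lambda_part_in_rect_partitions[OF assms, of "Suc j"] that by simp
  then show ?thesis by (simp add: partition_product_def lambda_map_def)
qed

lemma ex_block:
  fixes k :: "nat \<Rightarrow> nat"
  assumes "k 0 = 0" "\<forall>j<r. k j < k (Suc j)" "0 < i" "i \<le> k r"
  shows "\<exists>j<r. k j < i \<and> i \<le> k (Suc j)"
  using assms(2,4)
proof (induction r)
  case (Suc r)
  show ?case
  proof (cases "i \<le> k r")
    case True
    then show ?thesis using Suc by (auto intro: less_SucI)
  next
    case False
    then show ?thesis using Suc.prems(2) by (intro exI[of _ r]) simp
  qed
qed (use assms(1,3) in simp)

lemma block_unique:
  fixes k :: "nat \<Rightarrow> nat"
  assumes k: "\<forall>j<r. k j < k (Suc j)"
    and j: "j < r" "k j < i" "i \<le> k (Suc j)"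
    and j': "j' < r" "k j' < i" "i \<le> k (Suc j')"
  shows "j = j'"
proof (rule ccontr)
  assume "j \<noteq> j'"
  then have "k (Suc j) \<le> k j' \<or> k (Suc j') \<le> k j"
    using bounded_lift_Suc_mono_le[OF k, of "Suc j" j']
      bounded_lift_Suc_mono_le[OF k, of "Suc j'" j] j(1) j'(1) by linarith
  then show False using j j' by linarith
qed

lemma inj_on_lambda_map:
  assumes k0: "k 0 = 0" and k: "\<forall>j<r. k j < k (Suc j)" "k r < n"
  shows "inj_on (lambda_map n k r) (W_Theta n k r)"
proof (rule inj_onI)
  fix w v assume w: "w \<in> W_Theta n k r" and v: "v \<in> W_Theta n k r"
    and eq: "lambda_map n k r w = lambda_map n k r v"
  have on_block: "code_entry n w i = code_entry n v i"
    if j: "j < r" "k j < i" "i \<le> k (Suc j)" for i j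
  proof -
    have "lambda_part n k w (Suc j) = lambda_part n k v (Suc j)"
      using eq j(1) lambda_map_eq_iff by metis
    moreover have "k (Suc j - 1) \<le> k (Suc j)" using k(1) j(1) by (simp add: less_imp_le)
    ultimately have "map (code_entry n w) [Suc (k j)..<Suc (k (Suc j))] =
        map (code_entry n v) [Suc (k j)..<Suc (k (Suc j))]"
      by (metis rev_lambda_part diff_Suc_1)
    then show ?thesis using j(2,3) by auto
  qed
  have "\<forall>i\<in>{1..n}. code_entry n w i = code_entry n v i"
  proof
    fix i assume i: "i \<in> {1..n}"
    show "code_entry n w i = code_entry n v i"
    proof (cases "i \<le> k r")
      case True
      then show ?thesis using ex_block[OF k0 k(1), of i] i on_block by auto
    next
      case False
      then show ?thesis
        using code_entry_eq_0_last_block[OF k] w v i by simp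
    qed
  qed
  moreover have "w permutes {1..n}" "v permutes {1..n}" using w v by (simp_all add: W_Theta_def)
  ultimately show "w = v" using code_entry_inj by blast
qed

lemma ex_code_of_blocks:
  assumes k0: "k 0 = 0" and k: "\<forall>j<r. k j < k (Suc j)" "k r < n"
    and Ls: "Ls \<in> partition_product n k r"
  obtains \<alpha> where "\<forall>i\<in>{1..n}. \<alpha> i \<le> n - i"
    and "\<forall>j<r. map \<alpha> [Suc (k j)..<Suc (k (Suc j))] = rev (Ls ! j)"
    and "\<forall>i. k r < i \<longrightarrow> \<alpha> i = 0"
proof -
  have Ls_j: "fits_rect (k (Suc j) - k j) (n - k (Suc j)) (Ls ! j)" if "j < r" for j
    using Ls that by (simp add: partition_product_def rect_partitions_def)
  have k_le: "k (Suc j) \<le> k r" if "j < r" for j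
    using bounded_lift_Suc_mono_le[OF k(1), of "Suc j" r] that by simp
  define blk where "blk i = (THE j. j < r \<and> k j < i \<and> i \<le> k (Suc j))" for i
  have blk: "blk i = j" if "j < r" "k j < i" "i \<le> k (Suc j)" for i j
    unfolding blk_def using that block_unique[OF k(1)] by (intro the_equality) blast+
  define \<alpha> where "\<alpha> i = (if 0 < i \<and> i \<le> k r then rev (Ls ! blk i) ! (i - Suc (k (blk i))) else 0)"
    for i
  have blocks: "map \<alpha> [Suc (k j)..<Suc (k (Suc j))] = rev (Ls ! j)" if j: "j < r" for j
  proof (rule nth_equalityI)
    show "length (map \<alpha> [Suc (k j)..<Suc (k (Suc j))]) = length (rev (Ls ! j))"
      using Ls_j[OF j] by (simp add: fits_rect_def)
  next
    fix t assume "t < length (map \<alpha> [Suc (k j)..<Suc (k (Suc j))])"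
    then have t: "k j < Suc (k j + t)" "Suc (k j + t) \<le> k (Suc j)" by simp_all
    then show "map \<alpha> [Suc (k j)..<Suc (k (Suc j))] ! t = rev (Ls ! j) ! t"
      using blk[OF j t] k_le[OF j] by (simp add: \<alpha>_def)
  qed
  have "\<alpha> i \<le> n - i" if i: "i \<in> {1..n}" for i
  proof (cases "i \<le> k r")
    case True
    then obtain j where j: "j < r" "k j < i" "i \<le> k (Suc j)"
      using ex_block[OF k0 k(1), of i] i by auto
    then have "\<alpha> i \<in> set (rev (Ls ! j))" by (simp flip: blocks[OF j(1)])
    then have "\<alpha> i \<le> n - k (Suc j)" using Ls_j[OF j(1)] by (simp add: fits_rect_def)
    then show ?thesis using j(3) by linarith
  qed (simp add: \<alpha>_def)
  moreover have "\<forall>i. k r < i \<longrightarrow> \<alpha> i = 0" by (simp add: \<alpha>_def)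
  ultimately show ?thesis using that blocks by blast
qed

lemma partition_product_subset_lambda_map_image:
  assumes k0: "k 0 = 0" and k: "\<forall>j<r. k j < k (Suc j)" "k r < n"
  shows "partition_product n k r \<subseteq> lambda_map n k r ` W_Theta n k r"
proof
  fix Ls assume Ls: "Ls \<in> partition_product n k r"
  obtain \<alpha> where \<alpha>_le: "\<forall>i\<in>{1..n}. \<alpha> i \<le> n - i"
    and \<alpha>_blocks: "\<forall>j<r. map \<alpha> [Suc (k j)..<Suc (k (Suc j))] = rev (Ls ! j)"
    and \<alpha>_last: "\<forall>i. k r < i \<longrightarrow> \<alpha> i = 0"
    using ex_code_of_blocks[OF k0 k Ls] by blast
  obtain w where w: "w permutes {1..n}" and code: "\<forall>i\<in>{1..n}. code_entry n w i = \<alpha> i"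
    using ex_permutes_code_entry[OF \<alpha>_le] by blast
  have code_blocks: "map (code_entry n w) [Suc (k j)..<Suc (k (Suc j))] = rev (Ls ! j)"
    if j: "j < r" for j
  proof -
    have "k (Suc j) \<le> k r" using bounded_lift_Suc_mono_le[OF k(1), of "Suc j" r] j by simp
    then have "map (code_entry n w) [Suc (k j)..<Suc (k (Suc j))] =
        map \<alpha> [Suc (k j)..<Suc (k (Suc j))]"
      using code k(2) by simp
    then show ?thesis using \<alpha>_blocks j by simp
  qed
  have "lambda_map n k r w = Ls"
    unfolding lambda_map_eq_iff
  proof (intro conjI allI impI)
    show "length Ls = r" using Ls by (simp add: partition_product_def)
    fix j assume j: "j < r"
    have "rev (lambda_part n k w (Suc j)) = rev (Ls ! j)"
      using rev_lambda_part[of k "Suc j" n w] code_blocks[OF j] k(1) j by (simp add: less_imp_le)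
    then show "lambda_part n k w (Suc j) = Ls ! j" by simp
  qed
  moreover have "w \<in> W_Theta n k r"
    unfolding W_Theta_iff_sorted_code_blocks[OF k]
  proof (intro conjI w allI impI)
    fix j assume "j \<le> r"
    then consider "j < r" | "j = r" by linarith
    then show "sorted (map (code_entry n w) [Suc (k j)..<Suc (block_end n k r j)])"
    proof cases
      case 1
      have "sorted (rev (Ls ! j))"
        using Ls 1 by (simp add: partition_product_def rect_partitions_def fits_rect_def
            sorted_wrt_rev)
      then show ?thesis using code_blocks[OF 1] 1 by (simp add: block_end_def)
    next
      case 2
      then show ?thesis using code \<alpha>_last by (simp add: block_end_def sorted_map_upt_iff)
    qed
  qed
  ultimately show "Ls \<in> lambda_map n k r ` W_Theta n k r" by blast
qed

theorem proposition2p3: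
  fixes n r :: nat and k :: "nat \<Rightarrow> nat"
  assumes "n \<ge> 2" and "r \<ge> 1"
    and "k 0 = 0"
    and "\<forall>j<r. k j < k (Suc j)"
    and "k r < n"
  shows "(\<forall>w\<in>W_Theta n k r. \<forall>j\<in>{1..r}.
            lambda_part n k w j \<in> rect_partitions (k j - k (j - 1)) (n - k j))
         \<and> bij_betw (lambda_map n k r) (W_Theta n k r) (partition_product n k r)"
proof
  show "\<forall>w\<in>W_Theta n k r. \<forall>j\<in>{1..r}.
      lambda_part n k w j \<in> rect_partitions (k j - k (j - 1)) (n - k j)"
    using lambda_part_in_rect_partitions[OF assms(4,5)] by blast
  have "lambda_map n k r ` W_Theta n k r = partition_product n k r"
    using lambda_map_in_partition_product[OF assms(4,5)]
      partition_product_subset_lambda_map_image[OF assms(3-5)] by blast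
  then show "bij_betw (lambda_map n k r) (W_Theta n k r) (partition_product n k r)"
    using inj_on_lambda_map[OF assms(3-5)] by (simp add: bij_betw_def)
qed

end
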